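(* Let $\alpha>0$, $b\ge1$, $c\in\mathbb R$, and let $G_Y(a,\cdot)$ be the exponential distribution with rate $\lambda(a;\alpha)=\alpha(b+\sin(ca))$, i.e. $G_Y(a,l)=1-e^{-\lambda(a;\alpha)l}$ for $l\ge0$. Let $A_1,\dots,A_J$ ($J\in\mathbb N$) be Borel sets partitioning $[0,\infty)$, let $\delta_1,\dots,\delta_J>0$, and set $m(t)=\sum_{j=1}^J\delta_j\mathbf 1_{A_j}(t)$. If $\delta_j\le\alpha(b-1)$ for all $j=1,\dots,J$, then $m$ is the renewal density of an alternating non-homogeneous semi-Markov process on $\{0,1\}\times[0,\infty)$ with $S_0=1$, $X_0=0$, whose state-$1$ sojourn started at jump time $a$ has distribution function $G_Y(a,\cdot)$; that is, its renewal function $M(t)=\sum_{n\ge1}\mathbb P(X_{2n}\le t)$ equals $\int_0^t m(s)\,ds$.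
   Context: An alternating non-homogeneous semi-Markov process is a sequence $(S_n,X_n)_{n\ge0}$ of states in $\{0,1\}$ (with $S_n=1$ for even $n$, $S_n=0$ for odd $n$) and jump times $0=X_0\le X_1\le\cdots$, such that for each $n$ the conditional distribution of $X_{n+1}-X_n$ given the past depends only on $(S_n,X_n)$ and not on $n$; the distribution of state-$0$ sojourns is not required to be absolutely continuous. Periods in state 1 are $Y$-phases; a cycle is a $Y$-phase followed by a $Z$-phase (state $0$), and the renewal function counts the expected number of completed cycles. *)

theory Defs
  imports "HOL-Probability.Probability"
begin

text \<open>Events determined by the past (X_0,...,X_n): the sigma-algebra generated
  by these random variables consists exactly of the preimages of measurable
  sets of the product space.\<close>
definition past_events :: "'w measure \<Rightarrow> (nat \<Rightarrow> 'w \<Rightarrow> real) \<Rightarrow> nat \<Rightarrow> 'w set set" where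
  "past_events M X n =
     {{\<omega> \<in> space M. (\<lambda>i\<in>{..n}. X i \<omega>) \<in> C} | C. C \<in> sets (Pi\<^sub>M {..n} (\<lambda>_. borel))}"

text \<open>The Y-sojourn (state 1)
  started at jump time a has distribution function GY a; the Z-sojourn (state 0)
  started at a has distribution GZ a (a probability kernel on [0,oo), arbitrary,
  not necessarily absolutely continuous).  Conditional distributions given the
  past are expressed by the defining property of regular conditional laws.\<close>
definition alt_nhsm ::
  "'w measure \<Rightarrow> (nat \<Rightarrow> 'w \<Rightarrow> real) \<Rightarrow> (real \<Rightarrow> real \<Rightarrow> real) \<Rightarrow> (real \<Rightarrow> real measure) \<Rightarrow> bool" where
  "alt_nhsm M X GY GZ \<longleftrightarrow>
     prob_space M \<and>
     (\<forall>n. X n \<in> borel_measurable M) \<and>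
     (\<forall>\<omega>\<in>space M. X 0 \<omega> = 0) \<and>
     (\<forall>n. \<forall>\<omega>\<in>space M. X n \<omega> \<le> X (Suc n) \<omega>) \<and>
     GZ \<in> borel \<rightarrow>\<^sub>M prob_algebra borel \<and>
     (\<forall>a. emeasure (GZ a) {..<0} = 0) \<and>
     (\<forall>n. even n \<longrightarrow> (\<forall>E\<in>past_events M X n. \<forall>l\<ge>0.
         emeasure M ({\<omega>\<in>space M. X (Suc n) \<omega> - X n \<omega> \<le> l} \<inter> E) =
         (\<integral>\<^sup>+\<omega>\<in>E. ennreal (GY (X n \<omega>) l) \<partial>M))) \<and>
     (\<forall>n. odd n \<longrightarrow> (\<forall>E\<in>past_events M X n. \<forall>B\<in>sets borel.
         emeasure M ({\<omega>\<in>space M. X (Suc n) \<omega> - X n \<omega> \<in> B} \<inter> E) =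
         (\<integral>\<^sup>+\<omega>\<in>E. emeasure (GZ (X n \<omega>)) B \<partial>M)))"

definition renewal_function :: "'w measure \<Rightarrow> (nat \<Rightarrow> 'w \<Rightarrow> real) \<Rightarrow> real \<Rightarrow> ennreal" where
  "renewal_function M X t = (\<Sum>n. emeasure M {\<omega>\<in>space M. X (2 * Suc n) \<omega> \<le> t})"

end

theory Submission
  imports Defs
begin

text \<open>
  The process is built from an i.i.d. sequence of Exp(1) variables: the k-th one, divided by
  the rate at the start of the k-th Y-phase, is the length of that phase, and every Z-phase is
  deterministic.  If the cycle ends occurred with density m, the expected number of Y-phase
  ends up to time u would be F u = G_Y(0, u) + \<integral> G_Y(s, u - s) m(s) ds, so a Z-phase started
  at a is made to end at the time t where the target renewal function M t (the integral of m
  over [0, t]) reaches F a.  Since every \<delta> j \<le> \<alpha> (b - 1) is at most every rate, F dominates M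
  and the Z-phases have nonnegative length.  With this choice the one-cycle transition kernel P
  satisfies the renewal equation M(B) = P(0, B) + \<integral> P(s, B) dM(s) on half-lines, hence on all
  Borel sets.  Iterating it, the remainder after N cycles is O(2 ^ -N), because every cycle
  contains an Exp(1)/(\<alpha> (b + 1)) delay; so M t is the sum over n of P(X_2n \<le> t).
\<close>

lemma nn_integral_sequence_space_component:
  fixes N :: "'a measure" and phi :: "(nat \<Rightarrow> 'a) \<Rightarrow> 'a \<Rightarrow> ennreal"
  assumes N: "prob_space N"
  assumes phi[measurable]: "(\<lambda>x. phi (fst x) (snd x)) \<in> borel_measurable (PiM UNIV (\<lambda>_. N) \<Otimes>\<^sub>M N)"
  assumes dep: "\<And>\<omega> \<omega>'. (\<forall>j<k. \<omega> j = \<omega>' j) \<Longrightarrow> phi \<omega> = phi \<omega>'"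
  shows "(\<integral>\<^sup>+\<omega>. phi \<omega> (\<omega> k) \<partial>PiM UNIV (\<lambda>_. N)) = (\<integral>\<^sup>+\<omega>. \<integral>\<^sup>+e. phi \<omega> e \<partial>N \<partial>PiM UNIV (\<lambda>_. N))"
proof -
  interpret sequence_space N
    by (simp add: sequence_space_def product_prob_space_def product_sigma_finite_def N
        prob_space_imp_sigma_finite product_prob_space_axioms_def)
  interpret SS: pair_sigma_finite S S by unfold_locales
  have "(\<lambda>\<omega>. (\<omega>, \<omega> k)) \<in> measurable S (S \<Otimes>\<^sub>M N)" by measurable
  from measurable_compose[OF this phi]
  have [measurable]: "(\<lambda>\<omega>. phi \<omega> (\<omega> k)) \<in> borel_measurable S" by simp
  have "(\<integral>\<^sup>+\<omega>. phi \<omega> (\<omega> k) \<partial>S) = (\<integral>\<^sup>+\<omega>. phi \<omega> (\<omega> k) \<partial>distr (S \<Otimes>\<^sub>M S) S (\<lambda>(\<omega>, \<omega>'). comb_seq k \<omega> \<omega>'))"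
    by (simp add: PiM_comb_seq)
  also have "\<dots> = (\<integral>\<^sup>+x. phi (comb_seq k (fst x) (snd x)) (comb_seq k (fst x) (snd x) k) \<partial>(S \<Otimes>\<^sub>M S))"
    by (subst nn_integral_distr) (auto simp: split_beta' measurable_comb_seq)
  also have "\<dots> = (\<integral>\<^sup>+x. phi (fst x) (snd x 0) \<partial>(S \<Otimes>\<^sub>M S))"
  proof (rule nn_integral_cong)
    fix x :: "(nat \<Rightarrow> 'a) \<times> (nat \<Rightarrow> 'a)"
    have "phi (comb_seq k (fst x) (snd x)) = phi (fst x)"
      by (rule dep) (simp add: comb_seq_def)
    then show "phi (comb_seq k (fst x) (snd x)) (comb_seq k (fst x) (snd x) k) = phi (fst x) (snd x 0)"
      by (simp add: comb_seq_def)
  qed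
  also have "\<dots> = (\<integral>\<^sup>+\<omega>. \<integral>\<^sup>+\<omega>'. phi \<omega> (\<omega>' 0) \<partial>S \<partial>S)"
  proof -
    have sf: "sigma_finite_measure S"
      by (rule prob_space_imp_sigma_finite) (rule prob_space_PiM[OF N])
    have "(\<lambda>x. (fst x, snd x 0)) \<in> measurable (S \<Otimes>\<^sub>M S) (S \<Otimes>\<^sub>M N)" by measurable
    from sigma_finite_measure.nn_integral_fst[OF sf measurable_compose[OF this phi]]
    show ?thesis by simp
  qed
  also have "\<dots> = (\<integral>\<^sup>+\<omega>. \<integral>\<^sup>+e. phi \<omega> e \<partial>N \<partial>S)"
  proof (rule nn_integral_cong)
    fix \<omega> :: "nat \<Rightarrow> 'a" assume \<omega>: "\<omega> \<in> space S"
    have "(\<integral>\<^sup>+\<omega>'. phi \<omega> (\<omega>' 0) \<partial>S) = (\<integral>\<^sup>+e. phi \<omega> e \<partial>distr S N (\<lambda>\<omega>'. \<omega>' 0))"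
      using measurable_Pair2[OF phi \<omega>] by (subst nn_integral_distr) auto
    then show "(\<integral>\<^sup>+\<omega>'. phi \<omega> (\<omega>' 0) \<partial>S) = (\<integral>\<^sup>+e. phi \<omega> e \<partial>N)"
      by (simp add: PiM_component)
  qed
  finally show ?thesis .
qed

lemma exp_minus_diff_le: "0 \<le> (x::real) \<Longrightarrow> x \<le> y \<Longrightarrow> exp (- x) - exp (- y) \<le> y - x"
proof -
  assume xy: "0 \<le> x" "x \<le> y"
  have "exp (- x) * exp (x - y) = exp (- y)"
    by (simp flip: exp_add)
  then have "exp (- x) - exp (- y) = exp (- x) * (1 - exp (- (y - x)))"
    by (simp add: algebra_simps)
  also have "\<dots> \<le> 1 * (y - x)"
  proof (rule mult_mono)
    show "1 - exp (- (y - x)) \<le> y - x"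
      using exp_ge_add_one_self[of "- (y - x)"] by linarith
  qed (use xy in auto)
  finally show ?thesis by simp
qed

lemma nn_integral_exponential_Icc:
  fixes l a :: real assumes "0 < l" "0 \<le> a"
  shows "(\<integral>\<^sup>+s. ennreal (l * exp (- (l * (a - s)))) * indicator {0..a} s \<partial>lborel)
    = ennreal (1 - exp (- (l * a)))"
    (is "(\<integral>\<^sup>+s. ?h s \<partial>lborel) = _")
proof -
  have "(\<integral>\<^sup>+s. ?h s \<partial>lborel) = ennreal \<bar>- 1\<bar> * (\<integral>\<^sup>+x. ?h (a + (- 1) * x) \<partial>lborel)"
    by (rule nn_integral_real_affine) auto
  also have "\<dots> = (\<integral>\<^sup>+x. ?h (a - x) \<partial>lborel)"
    by simp
  also have "\<dots> = (\<integral>\<^sup>+x. ennreal (exponential_density l x) * indicator {..a} x \<partial>lborel)"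
    by (intro nn_integral_cong) (auto simp: exponential_density_def mult.commute split: split_indicator)
  also have "\<dots> = ennreal (1 - exp (- (l * a)))"
    using assms by (simp add: nn_integral_erlang_density erlang_CDF_def)
  finally show ?thesis .
qed

lemma suminf_eq_of_remainder_bound:
  fixes a r b :: "nat \<Rightarrow> ennreal"
  assumes split: "\<And>N. x = (\<Sum>n<N. a n) + r N" and "\<And>N. r N \<le> b N" and "b \<longlonglongrightarrow> 0"
  shows "suminf a = x"
proof (rule antisym)
  show "suminf a \<le> x"
  proof (rule suminf_le_const)
    show "sum a {..<N} \<le> x" for N
      using split[of N] by (simp add: add_increasing2)
  qed simp
  show "x \<le> suminf a"
  proof (rule LIMSEQ_le_const)
    show "(\<lambda>N. suminf a + b N) \<longlonglongrightarrow> suminf a"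
      using tendsto_add[OF tendsto_const assms(3)] by simp
    have "x \<le> suminf a + b N" for N
      using split[of N] assms(2)[of N] by (simp add: add_mono sum_le_suminf)
    then show "\<exists>N0. \<forall>N\<ge>N0. x \<le> suminf a + b N" by blast
  qed
qed

definition std_exponential :: "real measure" where
  "std_exponential = density lborel (exponential_density 1)"

lemma prob_space_std_exponential: "prob_space std_exponential"
  unfolding std_exponential_def by (rule prob_space_exponential_density) simp

lemma sets_std_exponential[simp, measurable_cong]: "sets std_exponential = sets borel"
  by (simp add: std_exponential_def)

lemma space_std_exponential[simp]: "space std_exponential = UNIV"
  by (simp add: std_exponential_def)

lemma emeasure_std_exponential_atMost:
  "emeasure std_exponential {..x} = ennreal (1 - exp (- max 0 x))"
  by (simp add: std_exponential_def emeasure_erlang_density erlang_CDF_def)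

lemma nn_integral_std_exponential_exp:
  "(\<integral>\<^sup>+e. ennreal (exp (- max 0 e)) \<partial>std_exponential) = ennreal (1 / 2)"
proof -
  have "ennreal (exponential_density 1 e) * ennreal (exp (- max 0 e))
      = ennreal (1 / 2) * ennreal (exponential_density 2 e)" for e :: real
  proof -
    have "exponential_density 1 e * exp (- max 0 e) = 1 / 2 * exponential_density 2 e"
      by (simp add: exponential_density_def exp_add[symmetric])
    then show ?thesis
      by (subst (1 2) ennreal_mult[symmetric]) (auto simp: exponential_density_def)
  qed
  then have "(\<integral>\<^sup>+e. ennreal (exp (- max 0 e)) \<partial>std_exponential)
      = (\<integral>\<^sup>+e. ennreal (1 / 2) * ennreal (exponential_density 2 e) \<partial>lborel)"
    unfolding std_exponential_def by (subst nn_integral_density) auto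
  also have "\<dots> = ennreal (1 / 2) * emeasure (density lborel (exponential_density 2)) UNIV"
    by (subst nn_integral_cmult) (auto simp: emeasure_density)
  also have "\<dots> = ennreal (1 / 2)"
    using prob_space.emeasure_space_1[OF prob_space_exponential_density[of 2]] by simp
  finally show ?thesis .
qed

section \<open>The target renewal density\<close>

locale sine_rate_setting =
  fixes \<alpha> b c :: real and J :: nat and A :: "nat \<Rightarrow> real set" and \<delta> :: "nat \<Rightarrow> real"
  assumes alpha_pos: "\<alpha> > 0"
    and A_borel: "\<forall>j\<in>{1..J}. A j \<in> sets borel"
    and A_disjoint: "disjoint_family_on A {1..J}"
    and A_cover: "(\<Union>j\<in>{1..J}. A j) = {0..}"
    and delta_pos: "\<forall>j\<in>{1..J}. \<delta> j > 0"
    and delta_le: "\<forall>j\<in>{1..J}. \<delta> j \<le> \<alpha> * (b - 1)"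
begin

definition "rate a = \<alpha> * (b + sin (c * a))"
definition "rate_min = \<alpha> * (b - 1)"
definition "rate_max = \<alpha> * (b + 1)"
definition "m s = (\<Sum>j=1..J. \<delta> j * indicator (A j) s)"
definition "m_min = Min (\<delta> ` {1..J})"

lemma J_ge_1: "1 \<le> J"
  using A_cover by (cases J) auto

lemma rate_min_pos: "rate_min > 0"
  using delta_pos delta_le J_ge_1 by (force simp: rate_min_def)

lemma rate_min_le_rate: "rate_min \<le> rate a"
  using alpha_pos by (simp add: rate_min_def rate_def)

lemma rate_le_rate_max: "rate a \<le> rate_max"
  using alpha_pos by (simp add: rate_max_def rate_def)

lemma rate_pos: "rate a > 0"
  using rate_min_le_rate[of a] rate_min_pos by linarith

lemma rate_max_pos: "rate_max > 0"
  using rate_le_rate_max[of 0] rate_pos[of 0] by linarith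

lemma borel_measurable_rate[measurable]: "rate \<in> borel_measurable borel"
  unfolding rate_def by (intro borel_measurable_continuous_onI continuous_intros)

lemma m_eq: assumes j: "j \<in> {1..J}" and s: "s \<in> A j" shows "m s = \<delta> j"
proof -
  have "s \<notin> A i" if "i \<in> {1..J} - {j}" for i
    using A_disjoint j s that unfolding disjoint_family_on_def by blast
  then have "(\<Sum>i\<in>{1..J} - {j}. \<delta> i * indicator (A i) s) = 0"
    by (intro sum.neutral) auto
  then show ?thesis
    unfolding m_def using j s by (subst sum.remove[of _ j]) auto
qed

lemma m_eq_0_of_neg: assumes "s < 0" shows "m s = 0"
proof -
  have "s \<notin> A j" if "j \<in> {1..J}" for j
  proof
    assume "s \<in> A j"
    then have "s \<in> (\<Union>j\<in>{1..J}. A j)" using that by blast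
    with assms show False unfolding A_cover by simp
  qed
  then show ?thesis unfolding m_def by (intro sum.neutral) auto
qed

lemma m_min_pos: "m_min > 0"
proof -
  have "m_min \<in> \<delta> ` {1..J}" unfolding m_min_def using J_ge_1 by (intro Min_in) auto
  then show ?thesis using delta_pos by auto
qed

lemma m_bounds: assumes "0 \<le> s" shows "m_min \<le> m s" and "m s \<le> rate_min"
proof -
  obtain j where j: "j \<in> {1..J}" "s \<in> A j" using A_cover assms by force
  then show "m_min \<le> m s" "m s \<le> rate_min"
    using m_eq[OF j] delta_le unfolding m_min_def rate_min_def by auto
qed

lemma m_nonneg: "0 \<le> m s"
  using m_bounds(1)[of s] m_min_pos m_eq_0_of_neg[of s] by (cases "s < 0") auto

lemma m_le_rate_min: "m s \<le> rate_min"
  using m_bounds(2)[of s] rate_min_pos m_eq_0_of_neg[of s] by (cases "s < 0") auto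

lemma borel_measurable_m[measurable]: "m \<in> borel_measurable borel"
  unfolding m_def using A_borel by (intro borel_measurable_sum) auto

definition "ren_measure = density lborel (\<lambda>s. ennreal (m s))"
definition "ren_fun t = enn2real (emeasure ren_measure {..t})"

lemma sets_ren_measure[simp, measurable_cong]: "sets ren_measure = sets borel"
  by (simp add: ren_measure_def)

lemma nn_integral_ren_measure:
  "f \<in> borel_measurable borel \<Longrightarrow>
    (\<integral>\<^sup>+s. f s \<partial>ren_measure) = (\<integral>\<^sup>+s. ennreal (m s) * f s \<partial>lborel)"
  unfolding ren_measure_def by (subst nn_integral_density) auto

lemma emeasure_ren_measure:
  "B \<in> sets borel \<Longrightarrow> emeasure ren_measure B = (\<integral>\<^sup>+s. ennreal (m s) * indicator B s \<partial>lborel)"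
  unfolding ren_measure_def by (subst emeasure_density) auto

lemma emeasure_ren_measure_Ioc_le:
  assumes "v \<le> u" shows "emeasure ren_measure {v<..u} \<le> ennreal (rate_min * (u - v))"
proof -
  have "emeasure ren_measure {v<..u} \<le> (\<integral>\<^sup>+s. ennreal rate_min * indicator {v<..u} s \<partial>lborel)"
    unfolding emeasure_ren_measure[OF greaterThanAtMost_borel]
    by (intro nn_integral_mono) (auto simp: m_le_rate_min intro!: ennreal_leI split: split_indicator)
  also have "\<dots> = ennreal (rate_min * (u - v))"
    using assms rate_min_pos by (subst nn_integral_cmult_indicator) (auto simp: ennreal_mult)
  finally show ?thesis .
qed

lemma emeasure_ren_measure_Ioc_ge:
  assumes "0 \<le> v" "v \<le> u" shows "ennreal (m_min * (u - v)) \<le> emeasure ren_measure {v<..u}"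
proof -
  have "ennreal (m_min * (u - v)) = (\<integral>\<^sup>+s. ennreal m_min * indicator {v<..u} s \<partial>lborel)"
    using assms m_min_pos by (subst nn_integral_cmult_indicator) (auto simp: ennreal_mult)
  also have "\<dots> \<le> emeasure ren_measure {v<..u}"
    unfolding emeasure_ren_measure[OF greaterThanAtMost_borel] using assms
    by (intro nn_integral_mono) (auto simp: m_bounds intro!: ennreal_leI split: split_indicator)
  finally show ?thesis .
qed

lemma emeasure_ren_measure_nonpos: assumes "t \<le> 0" shows "emeasure ren_measure {..t} = 0"
proof -
  have "ennreal (m s) * indicator {..t} s \<le> ennreal rate_min * indicator {0} s" for s :: real
    using assms m_le_rate_min[of s] m_eq_0_of_neg[of s]
    by (cases "s < 0"; cases "s = 0") (auto intro!: ennreal_leI split: split_indicator)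
  then have "emeasure ren_measure {..t} \<le> (\<integral>\<^sup>+s. ennreal rate_min * indicator {0::real} s \<partial>lborel)"
    unfolding emeasure_ren_measure[OF atMost_borel] by (intro nn_integral_mono)
  also have "\<dots> = 0" by (subst nn_integral_cmult_indicator) auto
  finally show ?thesis by simp
qed

lemma emeasure_ren_measure_split:
  assumes "v \<le> u"
  shows "emeasure ren_measure {..u} = emeasure ren_measure {..v} + emeasure ren_measure {v<..u}"
proof -
  have "{..u} = {..v} \<union> {v<..u}" using assms by auto
  then show ?thesis by (simp, subst plus_emeasure) auto
qed

lemma emeasure_ren_measure_atMost: "emeasure ren_measure {..t} = ennreal (ren_fun t)"
proof -
  have "emeasure ren_measure {..t} \<le> ennreal (rate_min * max 0 t)"
    using emeasure_ren_measure_split[of 0 t] emeasure_ren_measure_Ioc_le[of 0 t]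
      emeasure_ren_measure_nonpos[of 0] emeasure_ren_measure_nonpos[of t]
    by (cases "t \<le> 0") auto
  then have "emeasure ren_measure {..t} \<noteq> \<infinity>" by (auto simp: top_unique)
  then show ?thesis unfolding ren_fun_def by (simp add: ennreal_enn2real_if)
qed

lemma emeasure_ren_measure_atMost_eq_integral:
  "emeasure ren_measure {..t} = (\<integral>\<^sup>+s\<in>{0..t}. ennreal (m s) \<partial>lborel)"
  unfolding emeasure_ren_measure[OF atMost_borel]
  by (intro nn_integral_cong) (auto simp: m_eq_0_of_neg split: split_indicator)

lemma AE_ren_measure_nonneg: "AE s in ren_measure. 0 \<le> s"
proof (rule AE_I')
  show "{..0} \<in> null_sets ren_measure"
    by (simp add: null_sets_def emeasure_ren_measure_nonpos)
qed auto

lemma ren_fun_nonneg: "0 \<le> ren_fun t"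
  by (simp add: ren_fun_def)

lemma ren_fun_nonpos: "t \<le> 0 \<Longrightarrow> ren_fun t = 0"
  by (simp add: ren_fun_def emeasure_ren_measure_nonpos)

lemma ren_fun_diff:
  assumes "v \<le> u" shows "ren_fun u - ren_fun v = enn2real (emeasure ren_measure {v<..u})"
proof -
  have fin: "emeasure ren_measure {v<..u} < \<infinity>"
    using emeasure_ren_measure_Ioc_le[OF assms] by (simp add: le_less_trans)
  have "ren_fun u = enn2real (emeasure ren_measure {..u})"
    by (simp add: ren_fun_def)
  also have "\<dots> = enn2real (ennreal (ren_fun v) + emeasure ren_measure {v<..u})"
    using emeasure_ren_measure_split[OF assms] by (simp add: emeasure_ren_measure_atMost)
  also have "\<dots> = ren_fun v + enn2real (emeasure ren_measure {v<..u})"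
    using fin ren_fun_nonneg[of v] by (simp add: enn2real_plus)
  finally show ?thesis by simp
qed

lemma ren_fun_diff_le: "v \<le> u \<Longrightarrow> ren_fun u - ren_fun v \<le> rate_min * (u - v)"
  using emeasure_ren_measure_Ioc_le[of v u] rate_min_pos
  by (simp add: ren_fun_diff enn2real_leI)

lemma ren_fun_mono: "v \<le> u \<Longrightarrow> ren_fun v \<le> ren_fun u"
  using ren_fun_diff[of v u] enn2real_nonneg[of "emeasure ren_measure {v<..u}"] by linarith

lemma ren_fun_diff_ge:
  assumes "0 \<le> v" "v \<le> u" shows "m_min * (u - v) \<le> ren_fun u - ren_fun v"
proof -
  have "emeasure ren_measure {v<..u} \<noteq> \<infinity>"
    using emeasure_ren_measure_Ioc_le[OF assms(2)] by (auto simp: top_unique)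
  then have "ennreal (m_min * (u - v)) \<le> ennreal (ren_fun u - ren_fun v)"
    using emeasure_ren_measure_Ioc_ge[OF assms] by (simp add: ren_fun_diff[OF assms(2)] ennreal_enn2real_if)
  then show ?thesis using ren_fun_mono[OF assms(2)] by (simp add: ennreal_le_iff)
qed

lemma ren_fun_strict_mono: "0 \<le> v \<Longrightarrow> v < u \<Longrightarrow> ren_fun v < ren_fun u"
  using ren_fun_diff_ge[of v u] m_min_pos by (smt (verit) mult_pos_pos)

lemma ren_fun_ge: "0 \<le> t \<Longrightarrow> m_min * t \<le> ren_fun t"
  using ren_fun_diff_ge[of 0 t] ren_fun_nonpos[of 0] by simp

lemma continuous_on_ren_fun: "continuous_on S ren_fun"
proof (rule lipschitz_on_continuous_on)
  show "rate_min-lipschitz_on S ren_fun"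
  proof (rule lipschitz_onI)
    show "dist (ren_fun x) (ren_fun y) \<le> rate_min * dist x y" for x y
      using ren_fun_diff_le[of x y] ren_fun_diff_le[of y x] ren_fun_mono[of x y] ren_fun_mono[of y x]
      by (cases "x \<le> y") (auto simp: dist_real_def)
  qed (use rate_min_pos in simp)
qed

lemma ren_fun_surj: assumes "0 \<le> y" shows "\<exists>t\<ge>0. ren_fun t = y"
proof -
  define B where "B = y / m_min"
  have "0 \<le> B" "y \<le> ren_fun B"
    using assms m_min_pos ren_fun_ge[of B] by (auto simp: B_def)
  then show ?thesis
    using IVT'[of ren_fun 0 y B] assms continuous_on_ren_fun ren_fun_nonpos[of 0] by auto
qed

subsection \<open>Y-phases and the expected number of Y-phase ends\<close>

definition "Y_end s e = s + max 0 e / rate s"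
definition "Y_end_cdf s u = (if s \<le> u then 1 - exp (- (rate s * (u - s))) else 0)"

lemma measurable_Y_end[measurable (raw)]:
  assumes [measurable]: "f \<in> borel_measurable M" "g \<in> borel_measurable M"
  shows "(\<lambda>x. Y_end (f x) (g x)) \<in> borel_measurable M"
  unfolding Y_end_def by measurable

lemma Y_end_ge: "s \<le> Y_end s e"
  unfolding Y_end_def using rate_pos[of s] by simp

lemma Y_end_le_iff: "Y_end s e \<le> u \<longleftrightarrow> s \<le> u \<and> e \<le> rate s * (u - s)"
proof -
  have l: "rate s > 0" by (rule rate_pos)
  have "Y_end s e \<le> u \<longleftrightarrow> max 0 e / rate s \<le> u - s"
    unfolding Y_end_def by linarith
  also have "\<dots> \<longleftrightarrow> max 0 e \<le> rate s * (u - s)"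
    using l by (simp add: divide_le_eq mult.commute)
  also have "\<dots> \<longleftrightarrow> s \<le> u \<and> e \<le> rate s * (u - s)"
    using l by (simp add: zero_le_mult_iff)
  finally show ?thesis .
qed

lemma Y_end_diff_le_iff: "0 \<le> l \<Longrightarrow> Y_end s e - s \<le> l \<longleftrightarrow> e \<le> rate s * l"
  using Y_end_le_iff[of s e "s + l"] by auto

lemma emeasure_Y_end_le: "emeasure std_exponential {e. Y_end s e \<le> u} = ennreal (Y_end_cdf s u)"
proof (cases "s \<le> u")
  case True
  then have "{e. Y_end s e \<le> u} = {..rate s * (u - s)}" by (auto simp: Y_end_le_iff)
  moreover have "0 \<le> rate s * (u - s)" using True rate_pos[of s] by simp
  ultimately show ?thesis
    using True by (simp add: emeasure_std_exponential_atMost Y_end_cdf_def)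
qed (auto simp: Y_end_le_iff Y_end_cdf_def)

lemma Y_end_cdf_nonneg: "0 \<le> Y_end_cdf s u"
  using rate_pos[of s] by (simp add: Y_end_cdf_def)

lemma Y_end_cdf_le_1: "Y_end_cdf s u \<le> 1"
  by (simp add: Y_end_cdf_def)

lemma Y_end_cdf_eq_0: "u < s \<Longrightarrow> Y_end_cdf s u = 0"
  by (simp add: Y_end_cdf_def)

lemma Y_end_cdf_mono: "v \<le> u \<Longrightarrow> Y_end_cdf s v \<le> Y_end_cdf s u"
  using rate_pos[of s] by (auto simp: Y_end_cdf_def mult_left_mono)

lemma Y_end_cdf_0_strict_mono: "0 \<le> v \<Longrightarrow> v < u \<Longrightarrow> Y_end_cdf 0 v < Y_end_cdf 0 u"
  using rate_pos[of 0] by (simp add: Y_end_cdf_def)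

lemma borel_measurable_Y_end_cdf[measurable]: "(\<lambda>s. Y_end_cdf s u) \<in> borel_measurable borel"
  unfolding Y_end_cdf_def by measurable

lemma Y_end_cdf_diff_le:
  assumes "v \<le> u" shows "Y_end_cdf s u \<le> Y_end_cdf s v + rate_max * (u - v)"
proof -
  have l: "0 < rate s" "rate s \<le> rate_max" using rate_pos rate_le_rate_max by auto
  consider "u < s" | "v < s" "s \<le> u" | "s \<le> v" using assms by linarith
  then show ?thesis
  proof cases
    case 1 then show ?thesis using Y_end_cdf_nonneg[of s v] l assms by (simp add: Y_end_cdf_def)
  next
    case 2
    have "1 - exp (- (rate s * (u - s))) \<le> rate s * (u - s)"
      using exp_ge_add_one_self[of "- (rate s * (u - s))"] by simp
    also have "\<dots> \<le> rate_max * (u - v)" using l 2 by (intro mult_mono) auto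
    finally show ?thesis using 2 by (simp add: Y_end_cdf_def)
  next
    case 3
    have "exp (- (rate s * (v - s))) - exp (- (rate s * (u - s))) \<le> rate s * (u - s) - rate s * (v - s)"
      using l 3 assms by (intro exp_minus_diff_le) (auto intro: mult_left_mono)
    also have "\<dots> \<le> rate_max * (u - v)"
      using l assms by (simp add: mult_right_mono flip: right_diff_distrib)
    finally show ?thesis using 3 assms by (simp add: Y_end_cdf_def)
  qed
qed

definition "Y_end_cdf_integral u = enn2real (\<integral>\<^sup>+s. ennreal (Y_end_cdf s u) \<partial>ren_measure)"

text \<open>F u is the expected number of Y-phase ends up to time u when the cycles end at the epochs
  of the renewal measure m ds (plus the one at time 0).\<close>
definition "F u = Y_end_cdf 0 u + Y_end_cdf_integral u"

lemma nn_integral_Y_end_cdf_le: "(\<integral>\<^sup>+s. ennreal (Y_end_cdf s u) \<partial>ren_measure) \<le> ennreal (ren_fun u)"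
proof -
  have "(\<integral>\<^sup>+s. ennreal (Y_end_cdf s u) \<partial>ren_measure) \<le> (\<integral>\<^sup>+s. indicator {..u} s \<partial>ren_measure)"
    by (intro nn_integral_mono) (auto simp: Y_end_cdf_le_1 Y_end_cdf_eq_0 split: split_indicator)
  then show ?thesis by (simp add: emeasure_ren_measure_atMost)
qed

lemma ennreal_Y_end_cdf_integral:
  "ennreal (Y_end_cdf_integral u) = (\<integral>\<^sup>+s. ennreal (Y_end_cdf s u) \<partial>ren_measure)"
  using nn_integral_Y_end_cdf_le[of u]
  by (auto simp: Y_end_cdf_integral_def ennreal_enn2real_if top_unique)

lemma Y_end_cdf_integral_nonneg: "0 \<le> Y_end_cdf_integral u"
  by (simp add: Y_end_cdf_integral_def)

lemma Y_end_cdf_integral_mono: "v \<le> u \<Longrightarrow> Y_end_cdf_integral v \<le> Y_end_cdf_integral u"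
proof -
  assume "v \<le> u"
  then have "ennreal (Y_end_cdf_integral v) \<le> ennreal (Y_end_cdf_integral u)"
    unfolding ennreal_Y_end_cdf_integral by (intro nn_integral_mono ennreal_leI Y_end_cdf_mono)
  then show ?thesis using Y_end_cdf_integral_nonneg[of u] by simp
qed

lemma Y_end_cdf_integral_diff_le:
  assumes "v \<le> u"
  shows "Y_end_cdf_integral u \<le> Y_end_cdf_integral v + rate_max * (u - v) * ren_fun u"
proof -
  have "ennreal (Y_end_cdf s u)
      \<le> ennreal (Y_end_cdf s v) + ennreal (rate_max * (u - v)) * indicator {..u} s" for s
    using Y_end_cdf_diff_le[OF assms, of s] Y_end_cdf_nonneg[of s v] rate_max_pos assms
    by (cases "s \<le> u") (auto simp: Y_end_cdf_eq_0 simp flip: ennreal_plus intro!: ennreal_leI)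
  then have "ennreal (Y_end_cdf_integral u)
      \<le> (\<integral>\<^sup>+s. ennreal (Y_end_cdf s v) + ennreal (rate_max * (u - v)) * indicator {..u} s \<partial>ren_measure)"
    unfolding ennreal_Y_end_cdf_integral by (intro nn_integral_mono)
  also have "\<dots> = ennreal (Y_end_cdf_integral v + rate_max * (u - v) * ren_fun u)"
    using assms rate_max_pos ren_fun_nonneg[of u] Y_end_cdf_integral_nonneg[of v]
    by (subst nn_integral_add)
       (auto simp: nn_integral_cmult ennreal_Y_end_cdf_integral emeasure_ren_measure_atMost
        ennreal_mult ennreal_plus)
  finally show ?thesis
    using assms rate_max_pos ren_fun_nonneg[of u] Y_end_cdf_integral_nonneg[of v]
    by (subst (asm) ennreal_le_iff) auto
qed

lemma F_nonneg: "0 \<le> F u"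
  by (simp add: F_def Y_end_cdf_nonneg Y_end_cdf_integral_nonneg)

lemma F_mono: "v \<le> u \<Longrightarrow> F v \<le> F u"
  unfolding F_def using Y_end_cdf_mono Y_end_cdf_integral_mono by (intro add_mono)

lemma F_strict_mono: "0 \<le> v \<Longrightarrow> v < u \<Longrightarrow> F v < F u"
  unfolding F_def using Y_end_cdf_0_strict_mono Y_end_cdf_integral_mono
  by (intro add_strict_right_mono[THEN order.strict_trans2] add_left_mono) auto

lemma F_nonpos: assumes "u \<le> 0" shows "F u = 0"
proof -
  have "ennreal (Y_end_cdf_integral u) \<le> 0"
    using nn_integral_Y_end_cdf_le[of u] ren_fun_nonpos[OF assms]
    by (simp add: ennreal_Y_end_cdf_integral)
  then show ?thesis
    using assms Y_end_cdf_integral_nonneg[of u] by (simp add: F_def Y_end_cdf_def)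
qed

lemma F_le_iff: assumes "0 \<le> u" shows "F x \<le> F u \<longleftrightarrow> x \<le> u"
  using F_mono F_strict_mono[OF assms, of x] by force

lemma borel_measurable_F[measurable]: "F \<in> borel_measurable borel"
  by (rule borel_measurable_mono) (auto simp: mono_def F_mono)

lemma F_diff_le: "v \<le> u \<Longrightarrow> F u - F v \<le> rate_max * (u - v) * (1 + ren_fun u)"
  using Y_end_cdf_integral_diff_le[of v u] Y_end_cdf_diff_le[of v u 0]
  by (simp add: F_def algebra_simps)

lemma continuous_on_F: "continuous_on {..B} F"
proof (rule lipschitz_on_continuous_on)
  let ?K = "rate_max * (1 + ren_fun B)"
  have diff: "F u - F v \<le> ?K * (u - v)" if "v \<le> u" "u \<le> B" for u v
  proof -
    have "F u - F v \<le> rate_max * (u - v) * (1 + ren_fun u)" by (rule F_diff_le[OF that(1)])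
    also have "\<dots> \<le> rate_max * (u - v) * (1 + ren_fun B)"
      using that rate_max_pos ren_fun_mono[of u B] by (intro mult_left_mono) auto
    finally show ?thesis by (simp add: algebra_simps)
  qed
  show "?K-lipschitz_on {..B} F"
  proof (rule lipschitz_onI)
    show "dist (F x) (F y) \<le> ?K * dist x y" if "x \<in> {..B}" "y \<in> {..B}" for x y
      using that diff[of x y] diff[of y x] F_mono[of x y] F_mono[of y x]
      by (cases "x \<le> y") (auto simp: dist_real_def)
  qed (use rate_max_pos ren_fun_nonneg[of B] in simp)
qed

text \<open>This is where the hypothesis on the \<delta> j enters: a cycle end at s contributes
  m s exp (- rate s (a - s)) \<le> rate_min exp (- rate_min (a - s)) to the deficit, and these
  contributions integrate to at most the probability that the first Y-phase has ended by a.\<close>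
lemma ren_fun_le_F: assumes a: "0 \<le> a" shows "ren_fun a \<le> F a"
proof -
  define h where "h s = ennreal (rate_min * exp (- (rate_min * (a - s)))) * indicator {0..a} s" for s
  have h_measurable[measurable]: "h \<in> borel_measurable borel" unfolding h_def by measurable
  have pointwise: "ennreal (m s) * indicator {..a} s \<le> ennreal (m s) * ennreal (Y_end_cdf s a) + h s" for s
  proof (cases "0 \<le> s \<and> s \<le> a")
    case True
    have "exp (- (rate s * (a - s))) \<le> exp (- (rate_min * (a - s)))"
      using True rate_min_le_rate[of s] by (intro exp_mono) (auto intro: mult_right_mono)
    then have "m s * exp (- (rate s * (a - s))) \<le> rate_min * exp (- (rate_min * (a - s)))"
      using m_le_rate_min[of s] m_nonneg[of s] by (intro mult_mono) auto
    then have "m s \<le> m s * Y_end_cdf s a + rate_min * exp (- (rate_min * (a - s)))"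
      using True by (simp add: Y_end_cdf_def algebra_simps)
    then show ?thesis
      using True m_nonneg[of s] Y_end_cdf_nonneg[of s a] rate_min_pos
      by (simp add: h_def ennreal_leI flip: ennreal_mult ennreal_plus)
  qed (auto simp: m_eq_0_of_neg)
  have "ennreal (ren_fun a) \<le> (\<integral>\<^sup>+s. ennreal (m s) * ennreal (Y_end_cdf s a) + h s \<partial>lborel)"
    unfolding emeasure_ren_measure_atMost[symmetric] emeasure_ren_measure[OF atMost_borel]
    by (intro nn_integral_mono pointwise)
  also have "\<dots> = ennreal (Y_end_cdf_integral a) + ennreal (1 - exp (- (rate_min * a)))"
    using nn_integral_exponential_Icc[OF rate_min_pos a, folded h_def]
    by (subst nn_integral_add) (auto simp: ennreal_Y_end_cdf_integral nn_integral_ren_measure)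
  also have "\<dots> \<le> ennreal (Y_end_cdf_integral a) + ennreal (Y_end_cdf 0 a)"
    using a rate_min_le_rate[of 0] by (intro add_left_mono ennreal_leI) (simp add: Y_end_cdf_def mult_right_mono)
  also have "\<dots> = ennreal (F a)"
    by (simp add: F_def Y_end_cdf_nonneg Y_end_cdf_integral_nonneg ennreal_plus add.commute)
  finally show ?thesis using F_nonneg[of a] by simp
qed

lemma F_surj: assumes "0 \<le> y" shows "\<exists>u\<ge>0. F u = y"
proof -
  define B where "B = y / m_min"
  have "0 \<le> B" "y \<le> F B"
    using assms m_min_pos ren_fun_ge[of B] ren_fun_le_F[of B] by (auto simp: B_def)
  moreover have "continuous_on {0..B} F"
    by (rule continuous_on_subset[OF continuous_on_F]) auto
  ultimately show ?thesis
    using IVT'[of F 0 y B] assms F_nonpos[of 0] by auto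
qed

subsection \<open>Z-phases and the cycle kernel\<close>

definition "Z_end a = (SOME t. 0 \<le> t \<and> ren_fun t = F a)"

lemma Z_end_nonneg: "0 \<le> Z_end a"
  and ren_fun_Z_end: "ren_fun (Z_end a) = F a"
  using someI_ex[OF ren_fun_surj[OF F_nonneg[of a]]] unfolding Z_end_def by auto

lemma Z_end_le_iff: "Z_end a \<le> t \<longleftrightarrow> 0 \<le> t \<and> F a \<le> ren_fun t"
  using Z_end_nonneg[of a] ren_fun_Z_end[of a] ren_fun_mono[of "Z_end a" t] ren_fun_strict_mono[of t "Z_end a"]
  by (cases "Z_end a \<le> t") auto

lemma Z_end_ge: "a \<le> Z_end a"
proof (cases "0 \<le> a")
  case True
  then show ?thesis
    using ren_fun_le_F[OF True] Z_end_nonneg[of a] ren_fun_Z_end[of a] ren_fun_strict_mono[of "Z_end a" a] by force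
qed (use Z_end_nonneg[of a] in auto)

lemma borel_measurable_Z_end[measurable]: "Z_end \<in> borel_measurable borel"
proof (subst borel_measurable_iff_le, intro allI)
  fix t
  have "{a \<in> space borel. Z_end a \<le> t} = (if 0 \<le> t then {a. F a \<le> ren_fun t} else {})"
    by (auto simp: Z_end_le_iff)
  then show "{a \<in> space borel. Z_end a \<le> t} \<in> sets borel" by auto
qed

definition "cycle_end s e = Z_end (Y_end s e)"

lemma measurable_cycle_end[measurable (raw)]:
  assumes [measurable]: "f \<in> borel_measurable M" "g \<in> borel_measurable M"
  shows "(\<lambda>x. cycle_end (f x) (g x)) \<in> borel_measurable M"
  unfolding cycle_end_def by measurable

lemma cycle_end_ge: "s \<le> cycle_end s e"
  unfolding cycle_end_def using Y_end_ge[of s e] Z_end_ge[of "Y_end s e"] by linarith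

lemma cycle_end_nonneg: "0 \<le> cycle_end s e"
  unfolding cycle_end_def using Z_end_nonneg .

definition "cycle_kernel g s = (\<integral>\<^sup>+e. g (cycle_end s e) \<partial>std_exponential)"

lemma borel_measurable_cycle_kernel[measurable]:
  assumes [measurable]: "g \<in> borel_measurable borel"
  shows "cycle_kernel g \<in> borel_measurable borel"
proof -
  interpret prob_space std_exponential by (rule prob_space_std_exponential)
  show ?thesis unfolding cycle_kernel_def by measurable
qed

lemma borel_measurable_cycle_kernel_power[measurable]:
  "g \<in> borel_measurable borel \<Longrightarrow> (cycle_kernel ^^ n) g \<in> borel_measurable borel"
  by (induction n) auto

lemma cycle_kernel_indicator_atMost:
  assumes "0 \<le> t" "0 \<le> u" "F u = ren_fun t"
  shows "cycle_kernel (indicator {..t}) s = ennreal (Y_end_cdf s u)"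
proof -
  have "cycle_end s e \<le> t \<longleftrightarrow> Y_end s e \<le> u" for e
    using assms F_le_iff[OF assms(2), of "Y_end s e"] by (simp add: cycle_end_def Z_end_le_iff)
  then have "cycle_kernel (indicator {..t}) s = (\<integral>\<^sup>+e. indicator {e. Y_end s e \<le> u} e \<partial>std_exponential)"
    unfolding cycle_kernel_def by (intro nn_integral_cong) (simp split: split_indicator)
  also have "\<dots> = emeasure std_exponential {e. Y_end s e \<le> u}"
  proof (rule nn_integral_indicator)
    have "{e \<in> space borel. Y_end s e \<le> u} \<in> sets borel" by measurable
    then show "{e. Y_end s e \<le> u} \<in> sets std_exponential" by simp
  qed
  finally show ?thesis by (simp add: emeasure_Y_end_le)
qed

subsection \<open>The semi-Markov process\<close>

definition "sample_space = PiM UNIV (\<lambda>_::nat. std_exponential)"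

primrec jump_time :: "nat \<Rightarrow> (nat \<Rightarrow> real) \<Rightarrow> real" where
  "jump_time 0 \<omega> = 0"
| "jump_time (Suc n) \<omega> =
    (if even n then Y_end (jump_time n \<omega>) (\<omega> (n div 2)) else Z_end (jump_time n \<omega>))"

lemma space_sample_space[simp]: "space sample_space = UNIV"
  by (simp add: sample_space_def space_PiM)

lemma prob_space_sample_space: "prob_space sample_space"
  unfolding sample_space_def by (rule prob_space_PiM) (rule prob_space_std_exponential)

lemma measurable_sample_component: "(\<lambda>\<omega>. \<omega> k) \<in> borel_measurable sample_space"
  unfolding sample_space_def by measurable

lemma borel_measurable_jump_time[measurable]: "jump_time n \<in> borel_measurable sample_space"
proof (induction n)
  case (Suc n)
  note [measurable] = Suc measurable_sample_component[of "n div 2"]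
  show ?case by simp
qed simp

lemma jump_time_mono: "jump_time n \<omega> \<le> jump_time (Suc n) \<omega>"
  by (simp add: Y_end_ge Z_end_ge)

lemma jump_time_Suc_Suc_even: "jump_time (2 * Suc k) \<omega> = cycle_end (jump_time (2 * k) \<omega>) (\<omega> k)"
proof -
  have "2 * Suc k = Suc (Suc (2 * k))" by simp
  then show ?thesis by (simp add: cycle_end_def)
qed

lemma jump_time_depends:
  "i \<le> 2 * k \<Longrightarrow> (\<forall>j<k. \<omega> j = \<omega>' j) \<Longrightarrow> jump_time i \<omega> = jump_time i \<omega>'"
proof (induction i)
  case (Suc i)
  then show ?case by (cases "even i") (auto elim!: allE[of _ "i div 2"])
qed simp

lemma borel_measurable_jump_time_PiM[measurable]:
  "jump_time n \<in> borel_measurable (PiM UNIV (\<lambda>_. std_exponential))"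
  using borel_measurable_jump_time unfolding sample_space_def .

lemma nn_integral_jump_time_even:
  assumes "g \<in> borel_measurable borel"
  shows "(\<integral>\<^sup>+\<omega>. g (jump_time (2 * n) \<omega>) \<partial>sample_space) = (cycle_kernel ^^ n) g 0"
  using assms
proof (induction n arbitrary: g)
  case 0
  then show ?case using prob_space.emeasure_space_1[OF prob_space_sample_space] by simp
next
  case (Suc n)
  note [measurable] = Suc.prems
  have "(\<integral>\<^sup>+\<omega>. g (jump_time (2 * Suc n) \<omega>) \<partial>sample_space)
      = (\<integral>\<^sup>+\<omega>. g (cycle_end (jump_time (2 * n) \<omega>) (\<omega> n)) \<partial>sample_space)"
    by (simp only: jump_time_Suc_Suc_even)
  also have "\<dots> = (\<integral>\<^sup>+\<omega>. cycle_kernel g (jump_time (2 * n) \<omega>) \<partial>sample_space)"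
    unfolding cycle_kernel_def sample_space_def
  proof (rule nn_integral_sequence_space_component[OF prob_space_std_exponential])
    fix \<omega> \<omega>' :: "nat \<Rightarrow> real" assume "\<forall>j<n. \<omega> j = \<omega>' j"
    then have "jump_time (2 * n) \<omega> = jump_time (2 * n) \<omega>'"
      by (rule jump_time_depends[OF order_refl])
    then show "(\<lambda>e. g (cycle_end (jump_time (2 * n) \<omega>) e)) = (\<lambda>e. g (cycle_end (jump_time (2 * n) \<omega>') e))"
      by simp
  qed measurable
  also have "\<dots> = (cycle_kernel ^^ Suc n) g 0"
    by (simp add: Suc.IH funpow_Suc_right del: funpow.simps)
  finally show ?case .
qed

lemma past_events_jump_time:
  assumes "E \<in> past_events sample_space jump_time n"
  obtains C where "E = {\<omega>. (\<lambda>i\<in>{..n}. jump_time i \<omega>) \<in> C}" and "E \<in> sets sample_space"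
proof -
  obtain C where C: "C \<in> sets (Pi\<^sub>M {..n} (\<lambda>_. borel))"
    and E: "E = {\<omega> \<in> space sample_space. (\<lambda>i\<in>{..n}. jump_time i \<omega>) \<in> C}"
    using assms unfolding past_events_def by blast
  have "E \<in> sets sample_space" unfolding E using C by measurable
  with E show ?thesis using that by auto
qed

lemma past_events_jump_time_depends:
  assumes "E \<in> past_events sample_space jump_time (2 * k)" "\<forall>j<k. \<omega> j = \<omega>' j"
  shows "\<omega> \<in> E \<longleftrightarrow> \<omega>' \<in> E"
proof -
  have "(\<lambda>i\<in>{..2*k}. jump_time i \<omega>) = (\<lambda>i\<in>{..2*k}. jump_time i \<omega>')"
    using jump_time_depends[OF _ assms(2)] by (intro restrict_ext) auto
  moreover obtain C where "E = {\<omega>. (\<lambda>i\<in>{..2*k}. jump_time i \<omega>) \<in> C}"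
    using past_events_jump_time[OF assms(1)] by blast
  ultimately show ?thesis by simp
qed

lemma Y_sojourn_law:
  assumes "even n" "E \<in> past_events sample_space jump_time n" "0 \<le> l"
  shows "emeasure sample_space ({\<omega>\<in>space sample_space. jump_time (Suc n) \<omega> - jump_time n \<omega> \<le> l} \<inter> E)
    = (\<integral>\<^sup>+\<omega>\<in>E. ennreal (1 - exp (- (\<alpha> * (b + sin (c * jump_time n \<omega>))) * l)) \<partial>sample_space)"
    (is "emeasure sample_space ?A = _")
proof -
  obtain k where k: "n = 2 * k" using assms(1) by blast
  have E[measurable]: "E \<in> sets (PiM UNIV (\<lambda>_. std_exponential))"
    using past_events_jump_time[OF assms(2)] unfolding sample_space_def by blast
  define phi :: "(nat \<Rightarrow> real) \<Rightarrow> real \<Rightarrow> ennreal"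
    where "phi \<omega> e = indicator E \<omega> * indicator {..rate (jump_time n \<omega>) * l} e" for \<omega> e
  have phi_if: "(\<lambda>x. phi (fst x) (snd x))
      = (\<lambda>x. if fst x \<in> E \<and> snd x \<le> rate (jump_time n (fst x)) * l then 1 else 0)"
    by (auto simp: phi_def fun_eq_iff split: split_indicator)
  then have phi_measurable:
    "(\<lambda>x. phi (fst x) (snd x)) \<in> borel_measurable (PiM UNIV (\<lambda>_. std_exponential) \<Otimes>\<^sub>M std_exponential)"
    unfolding phi_if by measurable
  have "?A \<in> sets sample_space"
    using E unfolding sample_space_def by measurable
  then have "emeasure sample_space ?A = (\<integral>\<^sup>+\<omega>. indicator ?A \<omega> \<partial>sample_space)"
    by simp
  also have "\<dots> = (\<integral>\<^sup>+\<omega>. phi \<omega> (\<omega> k) \<partial>sample_space)"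
    using assms(3) k
    by (intro nn_integral_cong) (auto simp: phi_def Y_end_diff_le_iff split: split_indicator)
  also have "\<dots> = (\<integral>\<^sup>+\<omega>. \<integral>\<^sup>+e. phi \<omega> e \<partial>std_exponential \<partial>sample_space)"
    unfolding sample_space_def
  proof (rule nn_integral_sequence_space_component[OF prob_space_std_exponential phi_measurable])
    fix \<omega> \<omega>' :: "nat \<Rightarrow> real" assume "\<forall>j<k. \<omega> j = \<omega>' j"
    then show "phi \<omega> = phi \<omega>'"
      using past_events_jump_time_depends[of E k \<omega> \<omega>'] jump_time_depends[of n k \<omega> \<omega>'] assms(2) k
      by (simp add: phi_def indicator_def k fun_eq_iff)
  qed
  also have "\<dots> = (\<integral>\<^sup>+\<omega>\<in>E. ennreal (1 - exp (- (\<alpha> * (b + sin (c * jump_time n \<omega>))) * l)) \<partial>sample_space)"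
  proof (rule nn_integral_cong)
    fix \<omega>
    have "0 \<le> rate (jump_time n \<omega>) * l" using assms(3) rate_pos[of "jump_time n \<omega>"] by simp
    moreover have "(\<integral>\<^sup>+e. phi \<omega> e \<partial>std_exponential)
        = indicator E \<omega> * emeasure std_exponential {..rate (jump_time n \<omega>) * l}"
      unfolding phi_def by (rule nn_integral_cmult_indicator) simp
    ultimately show "(\<integral>\<^sup>+e. phi \<omega> e \<partial>std_exponential)
        = ennreal (1 - exp (- (\<alpha> * (b + sin (c * jump_time n \<omega>))) * l)) * indicator E \<omega>"
      by (simp add: emeasure_std_exponential_atMost rate_def mult.commute)
  qed
  finally show ?thesis .
qed

definition "Z_sojourn a = return borel (Z_end a - a)"

lemma Z_sojourn_law:
  assumes "odd n" "E \<in> past_events sample_space jump_time n" "B \<in> sets borel"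
  shows "emeasure sample_space ({\<omega>\<in>space sample_space. jump_time (Suc n) \<omega> - jump_time n \<omega> \<in> B} \<inter> E)
    = (\<integral>\<^sup>+\<omega>\<in>E. emeasure (Z_sojourn (jump_time n \<omega>)) B \<partial>sample_space)"
    (is "emeasure sample_space ?A = _")
proof -
  have "E \<in> sets sample_space" using past_events_jump_time[OF assms(2)] by blast
  moreover have "{\<omega>\<in>space sample_space. jump_time (Suc n) \<omega> - jump_time n \<omega> \<in> B} \<in> sets sample_space"
    using assms(3) by measurable
  ultimately have "emeasure sample_space ?A = (\<integral>\<^sup>+\<omega>. indicator ?A \<omega> \<partial>sample_space)"
    by simp
  also have "\<dots> = (\<integral>\<^sup>+\<omega>\<in>E. emeasure (Z_sojourn (jump_time n \<omega>)) B \<partial>sample_space)"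
    using assms(1,3) by (intro nn_integral_cong) (simp add: Z_sojourn_def split: split_indicator)
  finally show ?thesis .
qed

lemma alt_nhsm_jump_time:
  "alt_nhsm sample_space jump_time (\<lambda>a l. 1 - exp (- (\<alpha> * (b + sin (c * a))) * l)) Z_sojourn"
proof -
  have "(\<lambda>a. Z_end a - a) \<in> borel_measurable borel" by measurable
  then have "Z_sojourn \<in> borel \<rightarrow>\<^sub>M prob_algebra borel"
    unfolding Z_sojourn_def by (rule measurable_compose) (rule measurable_return_prob_space)
  moreover have "emeasure (Z_sojourn a) {..<0} = 0" for a
    using Z_end_ge[of a] by (simp add: Z_sojourn_def)
  ultimately show ?thesis
    unfolding alt_nhsm_def
    using prob_space_sample_space jump_time_mono Y_sojourn_law Z_sojourn_law by auto
qed

subsection \<open>The renewal equation\<close>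

lemma cycle_kernel_cmult:
  assumes [measurable]: "u \<in> borel_measurable borel"
  shows "cycle_kernel (\<lambda>x. k * u x) s = k * cycle_kernel u s"
  unfolding cycle_kernel_def by (rule nn_integral_cmult) measurable

lemma cycle_kernel_add:
  assumes [measurable]: "u \<in> borel_measurable borel" "v \<in> borel_measurable borel"
  shows "cycle_kernel (\<lambda>x. u x + v x) s = cycle_kernel u s + cycle_kernel v s"
  unfolding cycle_kernel_def by (rule nn_integral_add) measurable

lemma cycle_kernel_mono: "(\<And>x. u x \<le> v x) \<Longrightarrow> cycle_kernel u s \<le> cycle_kernel v s"
  unfolding cycle_kernel_def by (intro nn_integral_mono) auto

lemma cycle_kernel_SUP:
  assumes [measurable]: "\<And>i. U i \<in> borel_measurable borel" and "incseq U"
  shows "cycle_kernel (SUP i. U i) s = (SUP i. cycle_kernel (U i) s)"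
proof -
  have "cycle_kernel (SUP i. U i) s = (\<integral>\<^sup>+e. (SUP i. U i (cycle_end s e)) \<partial>std_exponential)"
    unfolding cycle_kernel_def by (simp add: SUP_apply image_comp)
  also have "\<dots> = (SUP i. cycle_kernel (U i) s)"
    unfolding cycle_kernel_def
    using assms(2) by (intro nn_integral_monotone_convergence_SUP) (auto simp: incseq_def le_fun_def)
  finally show ?thesis .
qed

text \<open>The expected numbers of cycle ends one cycle after time 0 and one cycle after the
  epochs of the target renewal measure.\<close>
definition "ren_measure_next =
  measure_of UNIV (sets borel)
    (\<lambda>B. cycle_kernel (indicator B) 0 + (\<integral>\<^sup>+s. cycle_kernel (indicator B) s \<partial>ren_measure))"

lemma sets_ren_measure_next: "sets ren_measure_next = sets borel"
  unfolding ren_measure_next_def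
  by (metis sets.sigma_sets_eq sets_measure_of sets.space_closed space_borel)

lemma emeasure_ren_measure_next:
  assumes "B \<in> sets borel"
  shows "emeasure ren_measure_next B
    = cycle_kernel (indicator B) 0 + (\<integral>\<^sup>+s. cycle_kernel (indicator B) s \<partial>ren_measure)"
proof -
  let ?nu = "\<lambda>B. cycle_kernel (indicator B) 0 + (\<integral>\<^sup>+s. cycle_kernel (indicator B) s \<partial>ren_measure)"
  have "countably_additive (sets borel) ?nu"
  proof (rule countably_additiveI)
    fix A :: "nat \<Rightarrow> real set" assume A: "range A \<subseteq> sets borel" "disjoint_family A"
    have [measurable]: "A i \<in> sets borel" for i using A by auto
    have sum: "cycle_kernel (indicator (\<Union>i. A i)) s = (\<Sum>i. cycle_kernel (indicator (A i)) s)" for s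
      unfolding cycle_kernel_def suminf_indicator[OF A(2), symmetric]
      by (rule nn_integral_suminf) measurable
    have "(\<integral>\<^sup>+s. (\<Sum>i. cycle_kernel (indicator (A i)) s) \<partial>ren_measure)
        = (\<Sum>i. \<integral>\<^sup>+s. cycle_kernel (indicator (A i)) s \<partial>ren_measure)"
      by (rule nn_integral_suminf) measurable
    then show "(\<Sum>i. ?nu (A i)) = ?nu (\<Union>i. A i)"
      unfolding sum by (simp add: suminf_add)
  qed
  moreover have "positive (sets borel) ?nu"
    unfolding positive_def cycle_kernel_def by simp
  ultimately show ?thesis
    unfolding ren_measure_next_def using assms
    by (intro emeasure_measure_of_sigma) (auto simp: sets.sigma_algebra_axioms[of borel, simplified])
qed

lemma emeasure_ren_measure_next_atMost: "emeasure ren_measure_next {..t} = emeasure ren_measure {..t}"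
proof (cases "0 \<le> t")
  case True
  obtain u where u: "0 \<le> u" "F u = ren_fun t" using F_surj[OF ren_fun_nonneg] by blast
  have "emeasure ren_measure_next {..t}
      = ennreal (Y_end_cdf 0 u) + (\<integral>\<^sup>+s. ennreal (Y_end_cdf s u) \<partial>ren_measure)"
    by (simp add: emeasure_ren_measure_next cycle_kernel_indicator_atMost[OF True u])
  also have "\<dots> = ennreal (F u)"
    by (simp add: F_def ennreal_Y_end_cdf_integral Y_end_cdf_nonneg Y_end_cdf_integral_nonneg ennreal_plus)
  finally show ?thesis by (simp add: u emeasure_ren_measure_atMost)
next
  case False
  then have "indicator {..t} (cycle_end s e) = (0 :: ennreal)" for s e
    using cycle_end_nonneg[of s e] by auto
  then have "cycle_kernel (indicator {..t}) s = 0" for s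
    by (simp add: cycle_kernel_def)
  with False show ?thesis
    by (simp add: emeasure_ren_measure_next emeasure_ren_measure_nonpos)
qed

lemma ren_measure_next_eq: "ren_measure_next = ren_measure"
proof (rule measure_eqI_generator_eq[where E="range atMost" and \<Omega>=UNIV and A="\<lambda>i. {..real i}"])
  show "sets ren_measure_next = sigma_sets UNIV (range atMost)"
    unfolding sets_ren_measure_next by (subst borel_eq_atMost) (simp add: sets_measure_of)
  show "sets ren_measure = sigma_sets UNIV (range atMost)"
    unfolding sets_ren_measure by (subst borel_eq_atMost) (simp add: sets_measure_of)
  show "emeasure ren_measure_next X = emeasure ren_measure X" if "X \<in> range atMost" for X
    using that by (auto simp: emeasure_ren_measure_next_atMost)
  show "emeasure ren_measure_next {..real i} \<noteq> \<infinity>" for i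
    by (simp add: emeasure_ren_measure_next_atMost emeasure_ren_measure_atMost)
qed (auto simp: Int_stable_def intro: real_arch_simple)

lemma renewal_equation_SUP:
  assumes [measurable]: "\<And>i. U i \<in> borel_measurable borel" and inc: "incseq U"
    and eq: "\<And>i. (\<integral>\<^sup>+s. U i s \<partial>ren_measure)
      = cycle_kernel (U i) 0 + (\<integral>\<^sup>+s. cycle_kernel (U i) s \<partial>ren_measure)"
  shows "(\<integral>\<^sup>+s. (SUP i. U i) s \<partial>ren_measure)
    = cycle_kernel (SUP i. U i) 0 + (\<integral>\<^sup>+s. cycle_kernel (SUP i. U i) s \<partial>ren_measure)"
proof -
  have incP: "incseq (\<lambda>i. cycle_kernel (U i))"
    using inc by (auto simp: incseq_def le_fun_def intro!: cycle_kernel_mono)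
  then have inc0: "incseq (\<lambda>i. cycle_kernel (U i) 0)"
    and incI: "incseq (\<lambda>i. \<integral>\<^sup>+s. cycle_kernel (U i) s \<partial>ren_measure)"
    by (auto simp: incseq_def le_fun_def intro!: nn_integral_mono)
  have "(\<integral>\<^sup>+s. (SUP i. U i) s \<partial>ren_measure) = (\<integral>\<^sup>+s. (SUP i. U i s) \<partial>ren_measure)"
    by (simp add: SUP_apply image_comp)
  also have "\<dots> = (SUP i. \<integral>\<^sup>+s. U i s \<partial>ren_measure)"
    using inc by (intro nn_integral_monotone_convergence_SUP) (auto simp: incseq_def le_fun_def)
  also have "\<dots> = (SUP i. cycle_kernel (U i) 0) + (SUP i. \<integral>\<^sup>+s. cycle_kernel (U i) s \<partial>ren_measure)"
    unfolding eq by (rule ennreal_SUP_add[OF inc0 incI])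
  also have "(SUP i. \<integral>\<^sup>+s. cycle_kernel (U i) s \<partial>ren_measure)
      = (\<integral>\<^sup>+s. (SUP i. cycle_kernel (U i) s) \<partial>ren_measure)"
    using incP by (intro nn_integral_monotone_convergence_SUP[symmetric]) (auto simp: incseq_def le_fun_def)
  also have "\<dots> = (\<integral>\<^sup>+s. cycle_kernel (SUP i. U i) s \<partial>ren_measure)"
    using inc by (simp add: cycle_kernel_SUP)
  also have "(SUP i. cycle_kernel (U i) 0) = cycle_kernel (SUP i. U i) 0"
    using inc by (simp add: cycle_kernel_SUP)
  finally show ?thesis .
qed

lemma renewal_equation:
  assumes "g \<in> borel_measurable borel"
  shows "(\<integral>\<^sup>+s. g s \<partial>ren_measure) = cycle_kernel g 0 + (\<integral>\<^sup>+s. cycle_kernel g s \<partial>ren_measure)"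
  using assms
proof (induction rule: borel_measurable_induct)
  case (cong f g)
  then have "f = g" by (auto simp: fun_eq_iff)
  with cong show ?case by simp
next
  case (set A)
  then show ?case
    using emeasure_ren_measure_next[OF set] by (simp add: ren_measure_next_eq)
next
  case (mult u k)
  note [measurable] = mult(2)
  have "(\<integral>\<^sup>+s. k * u s \<partial>ren_measure) = k * (\<integral>\<^sup>+s. u s \<partial>ren_measure)"
    by (rule nn_integral_cmult) measurable
  also have "\<dots> = k * cycle_kernel u 0 + k * (\<integral>\<^sup>+s. cycle_kernel u s \<partial>ren_measure)"
    using mult(4) by (simp add: distrib_left)
  also have "k * (\<integral>\<^sup>+s. cycle_kernel u s \<partial>ren_measure) = (\<integral>\<^sup>+s. k * cycle_kernel u s \<partial>ren_measure)"
    by (rule nn_integral_cmult[symmetric]) measurable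
  finally show ?case by (simp add: cycle_kernel_cmult)
next
  case (add u v)
  note [measurable] = add(1,3)
  have kernel_add: "cycle_kernel (\<lambda>x. v x + u x) s = cycle_kernel v s + cycle_kernel u s" for s
    using cycle_kernel_add[OF add(3,1)] .
  have "(\<integral>\<^sup>+s. v s + u s \<partial>ren_measure) = (\<integral>\<^sup>+s. v s \<partial>ren_measure) + (\<integral>\<^sup>+s. u s \<partial>ren_measure)"
    by (intro nn_integral_add) auto
  also have "\<dots> = (cycle_kernel v 0 + cycle_kernel u 0)
      + ((\<integral>\<^sup>+s. cycle_kernel v s \<partial>ren_measure) + (\<integral>\<^sup>+s. cycle_kernel u s \<partial>ren_measure))"
    using add(6,7) by (simp add: ac_simps)
  also have "(\<integral>\<^sup>+s. cycle_kernel v s \<partial>ren_measure) + (\<integral>\<^sup>+s. cycle_kernel u s \<partial>ren_measure)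
      = (\<integral>\<^sup>+s. cycle_kernel v s + cycle_kernel u s \<partial>ren_measure)"
    by (intro nn_integral_add[symmetric]) auto
  finally show ?case by (simp only: kernel_add)
next
  case (seq U)
  show ?case by (rule renewal_equation_SUP[OF seq(1,3,5)])
qed

lemma renewal_equation_iterate:
  assumes [measurable]: "g \<in> borel_measurable borel"
  shows "(\<integral>\<^sup>+s. g s \<partial>ren_measure)
    = (\<Sum>n<N. (cycle_kernel ^^ Suc n) g 0) + (\<integral>\<^sup>+s. (cycle_kernel ^^ N) g s \<partial>ren_measure)"
proof (induction N)
  case (Suc N)
  then show ?case
    using renewal_equation[of "(cycle_kernel ^^ N) g"] by (simp add: ac_simps)
qed simp

subsection \<open>Geometric decay of the remainder\<close>

lemma cycle_end_ge_delay: "s + max 0 e / rate_max \<le> cycle_end s e"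
proof -
  have "max 0 e / rate_max \<le> max 0 e / rate s"
    using rate_pos[of s] rate_le_rate_max[of s] by (intro divide_left_mono) auto
  then show ?thesis
    using Z_end_ge[of "Y_end s e"] by (simp add: cycle_end_def Y_end_def)
qed

lemma exp_cycle_end_le: "exp (rate_max * (t - cycle_end s e)) \<le> exp (rate_max * (t - s)) * exp (- max 0 e)"
proof -
  have "max 0 e = rate_max * (max 0 e / rate_max)" using rate_max_pos by simp
  also have "\<dots> \<le> rate_max * (cycle_end s e - s)"
    using cycle_end_ge_delay[of s e] rate_max_pos by (intro mult_left_mono) auto
  finally show ?thesis by (simp add: algebra_simps flip: exp_add)
qed

lemma cycle_kernel_power_atMost_le:
  "(cycle_kernel ^^ N) (indicator {..t}) s \<le> ennreal (exp (rate_max * (t - s)) / 2 ^ N) * indicator {..t} s"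
proof (induction N arbitrary: s)
  case 0
  show ?case using rate_max_pos by (auto intro!: ennreal_leI split: split_indicator)
next
  case (Suc N)
  let ?C = "ennreal (exp (rate_max * (t - s)) / 2 ^ N) * indicator {..t} s"
  have "(cycle_kernel ^^ N) (indicator {..t}) (cycle_end s e) \<le> ?C * ennreal (exp (- max 0 e))" for e
  proof (cases "cycle_end s e \<le> t")
    case True
    then have "s \<le> t" using cycle_end_ge[of s e] by linarith
    have "exp (rate_max * (t - cycle_end s e)) / 2 ^ N \<le> exp (rate_max * (t - s)) / 2 ^ N * exp (- max 0 e)"
      using exp_cycle_end_le[of t s e] by (simp add: field_simps)
    then have "ennreal (exp (rate_max * (t - cycle_end s e)) / 2 ^ N)
        \<le> ennreal (exp (rate_max * (t - s)) / 2 ^ N) * ennreal (exp (- max 0 e))"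
      by (simp add: ennreal_leI flip: ennreal_mult)
    then show ?thesis
      using Suc.IH[of "cycle_end s e"] True \<open>s \<le> t\<close> by simp
  next
    case False
    then show ?thesis using Suc.IH[of "cycle_end s e"] by simp
  qed
  then have "(cycle_kernel ^^ Suc N) (indicator {..t}) s \<le> (\<integral>\<^sup>+e. ?C * ennreal (exp (- max 0 e)) \<partial>std_exponential)"
    by (simp add: cycle_kernel_def nn_integral_mono)
  also have "\<dots> = ?C * ennreal (1 / 2)"
    by (simp add: nn_integral_cmult nn_integral_std_exponential_exp)
  also have "\<dots> = ennreal (exp (rate_max * (t - s)) / 2 ^ N) * ennreal (1 / 2) * indicator {..t} s"
    by (simp only: ac_simps)
  also have "ennreal (exp (rate_max * (t - s)) / 2 ^ N) * ennreal (1 / 2)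
      = ennreal (exp (rate_max * (t - s)) / 2 ^ Suc N)"
    by (subst ennreal_mult[symmetric]) auto
  finally show ?case .
qed

lemma nn_integral_cycle_kernel_power_atMost_le:
  assumes "0 \<le> t"
  shows "(\<integral>\<^sup>+s. (cycle_kernel ^^ N) (indicator {..t}) s \<partial>ren_measure)
    \<le> ennreal (exp (rate_max * t) * ren_fun t / 2 ^ N)"
proof -
  have "(\<integral>\<^sup>+s. (cycle_kernel ^^ N) (indicator {..t}) s \<partial>ren_measure)
      \<le> (\<integral>\<^sup>+s. ennreal (exp (rate_max * t) / 2 ^ N) * indicator {..t} s \<partial>ren_measure)"
  proof (rule nn_integral_mono_AE)
    show "AE s in ren_measure. (cycle_kernel ^^ N) (indicator {..t}) s
        \<le> ennreal (exp (rate_max * t) / 2 ^ N) * indicator {..t} s"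
      using AE_ren_measure_nonneg
    proof eventually_elim
      case (elim s)
      then have "exp (rate_max * (t - s)) / 2 ^ N \<le> exp (rate_max * t) / 2 ^ N"
        using rate_max_pos by (simp add: divide_right_mono mult_left_mono)
      then show ?case
        using cycle_kernel_power_atMost_le[of N t s]
        by (elim order_trans) (auto intro!: ennreal_leI split: split_indicator)
    qed
  qed
  also have "\<dots> = ennreal (exp (rate_max * t) * ren_fun t / 2 ^ N)"
    using ren_fun_nonneg[of t]
    by (simp add: nn_integral_cmult_indicator emeasure_ren_measure_atMost ennreal_mult'[symmetric])
  finally show ?thesis .
qed

lemma renewal_function_jump_time:
  assumes "0 \<le> t"
  shows "renewal_function sample_space jump_time t = (\<integral>\<^sup>+s\<in>{0..t}. ennreal (m s) \<partial>lborel)"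
proof -
  have "emeasure sample_space {\<omega>\<in>space sample_space. jump_time (2 * Suc n) \<omega> \<le> t}
      = (cycle_kernel ^^ Suc n) (indicator {..t}) 0" for n
  proof -
    have "{\<omega>\<in>space sample_space. jump_time (2 * Suc n) \<omega> \<le> t} \<in> sets sample_space" by measurable
    then have "emeasure sample_space {\<omega>\<in>space sample_space. jump_time (2 * Suc n) \<omega> \<le> t}
        = (\<integral>\<^sup>+\<omega>. indicator {..t} (jump_time (2 * Suc n) \<omega>) \<partial>sample_space)"
      by (simp del: jump_time.simps flip: nn_integral_indicator add: indicator_def)
    also have "\<dots> = (cycle_kernel ^^ Suc n) (indicator {..t}) 0"
      by (rule nn_integral_jump_time_even) simp
    finally show ?thesis .
  qed
  then have "renewal_function sample_space jump_time t = (\<Sum>n. (cycle_kernel ^^ Suc n) (indicator {..t}) 0)"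
    by (simp add: renewal_function_def)
  also have "\<dots> = emeasure ren_measure {..t}"
  proof (rule suminf_eq_of_remainder_bound)
    show "emeasure ren_measure {..t} = (\<Sum>n<N. (cycle_kernel ^^ Suc n) (indicator {..t}) 0)
        + (\<integral>\<^sup>+s. (cycle_kernel ^^ N) (indicator {..t}) s \<partial>ren_measure)" for N
      using renewal_equation_iterate[of "indicator {..t}" N] by simp
    show "(\<integral>\<^sup>+s. (cycle_kernel ^^ N) (indicator {..t}) s \<partial>ren_measure)
        \<le> ennreal (exp (rate_max * t) * ren_fun t / 2 ^ N)" for N
      using nn_integral_cycle_kernel_power_atMost_le[OF assms] .
    have "(\<lambda>N. exp (rate_max * t) * ren_fun t / 2 ^ N) \<longlonglongrightarrow> 0"
      by (intro LIMSEQ_divide_realpow_zero) auto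
    from tendsto_ennrealI[OF this]
    show "(\<lambda>N. ennreal (exp (rate_max * t) * ren_fun t / 2 ^ N)) \<longlonglongrightarrow> 0"
      by simp
  qed
  finally show ?thesis by (simp add: emeasure_ren_measure_atMost_eq_integral)
qed

end

theorem corollary3:
  fixes \<alpha> b c :: real and J :: nat and A :: "nat \<Rightarrow> real set" and \<delta> :: "nat \<Rightarrow> real"
  assumes "\<alpha> > 0" and "b \<ge> 1"
    and "\<forall>j\<in>{1..J}. A j \<in> sets borel"
    and "disjoint_family_on A {1..J}"
    and "(\<Union>j\<in>{1..J}. A j) = {0..}"
    and "\<forall>j\<in>{1..J}. \<delta> j > 0"
    and "\<forall>j\<in>{1..J}. \<delta> j \<le> \<alpha> * (b - 1)"
  shows "\<exists>(M :: (nat \<Rightarrow> real) measure) X GZ.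
           alt_nhsm M X (\<lambda>a l. 1 - exp (- (\<alpha> * (b + sin (c * a))) * l)) GZ \<and>
           (\<forall>t\<ge>0. renewal_function M X t =
              (\<integral>\<^sup>+s\<in>{0..t}. ennreal (\<Sum>j=1..J. \<delta> j * indicator (A j) s) \<partial>lborel))"
proof -
  interpret sine_rate_setting \<alpha> b c J A \<delta>
    using assms by unfold_locales
  show ?thesis
    using alt_nhsm_jump_time renewal_function_jump_time unfolding m_def by blast
qed

end
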